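(* For every bipartite graph $G$ there is a bipartite graph $H$ such that $\mathrm{Ind}(H)$ is vertex-decomposable and the $h$-vector of $\mathrm{Ind}(H)$ (with trailing zeros removed) equals the face vector of $\mathrm{Ind}(G)$.
   Context: $\mathrm{Ind}(G)$ is the simplicial complex of independent sets of $G$. Face vector of a $(d-1)$-dimensional complex: $(f_{-1},\ldots,f_{d-1})$, $f_i$ = number of faces with $i+1$ elements; $h$-vector: $(h_0,\ldots,h_d)$, $h_j=\sum_{i=0}^{j}(-1)^{j-i}\binom{d-i}{j-i}f_{i-1}$. A pure complex $\Delta$ is vertex-decomposable if it is a simplex or has a vertex $v$ with $\mathrm{link}_\Delta v=\{\tau\in\Delta: v\notin\tau,\ \tau\cup\{v\}\in\Delta\}$ and $\mathrm{del}_\Delta v=\{\tau\in\Delta: v\notin\tau\}$ both pure and vertex-decomposable. *)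

theory Defs
  imports Main
begin

definition simple_graph :: "'a set \<Rightarrow> 'a set set \<Rightarrow> bool" where
  "simple_graph V E \<longleftrightarrow> finite V \<and> (\<forall>e\<in>E. e \<subseteq> V \<and> card e = 2)"

definition bipartite :: "'a set \<Rightarrow> 'a set set \<Rightarrow> bool" where
  "bipartite V E \<longleftrightarrow> (\<exists>A. A \<subseteq> V \<and> (\<forall>e\<in>E. card (e \<inter> A) = 1))"

definition Ind :: "'a set \<Rightarrow> 'a set set \<Rightarrow> 'a set set" where
  "Ind V E = {S. S \<subseteq> V \<and> (\<forall>e\<in>E. \<not> e \<subseteq> S)}"

definition facets :: "'a set set \<Rightarrow> 'a set set" where
  "facets \<Delta> = {F\<in>\<Delta>. \<forall>G\<in>\<Delta>. F \<subseteq> G \<longrightarrow> G = F}"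

definition pure :: "'a set set \<Rightarrow> bool" where
  "pure \<Delta> \<longleftrightarrow> (\<forall>F\<in>facets \<Delta>. \<forall>G\<in>facets \<Delta>. card F = card G)"

definition is_simplex :: "'a set set \<Rightarrow> bool" where
  "is_simplex \<Delta> \<longleftrightarrow> (\<exists>F. finite F \<and> \<Delta> = Pow F)"

definition link :: "'a set set \<Rightarrow> 'a \<Rightarrow> 'a set set" where
  "link \<Delta> v = {\<tau>\<in>\<Delta>. v \<notin> \<tau> \<and> insert v \<tau> \<in> \<Delta>}"

definition del :: "'a set set \<Rightarrow> 'a \<Rightarrow> 'a set set" where
  "del \<Delta> v = {\<tau>\<in>\<Delta>. v \<notin> \<tau>}"

inductive vertex_decomposable :: "'a set set \<Rightarrow> bool" where
  simplex: "pure \<Delta> \<Longrightarrow> is_simplex \<Delta> \<Longrightarrow> vertex_decomposable \<Delta>"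
| decomp: "pure \<Delta> \<Longrightarrow> {v} \<in> \<Delta> \<Longrightarrow> pure (link \<Delta> v) \<Longrightarrow> pure (del \<Delta> v)
           \<Longrightarrow> vertex_decomposable (link \<Delta> v) \<Longrightarrow> vertex_decomposable (del \<Delta> v)
           \<Longrightarrow> vertex_decomposable \<Delta>"

text \<open>d = dim + 1 = maximal face size.\<close>
definition cdim :: "'a set set \<Rightarrow> nat" where
  "cdim \<Delta> = Max (card ` \<Delta>)"

text \<open>Number of faces with k elements, i.e. f_{k-1}.\<close>
definition nfaces :: "'a set set \<Rightarrow> nat \<Rightarrow> nat" where
  "nfaces \<Delta> k = card {F\<in>\<Delta>. card F = k}"

definition fvec :: "'a set set \<Rightarrow> nat list" where
  "fvec \<Delta> = map (nfaces \<Delta>) [0..<cdim \<Delta> + 1]"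

definition hvec :: "'a set set \<Rightarrow> int list" where
  "hvec \<Delta> = map (\<lambda>j. \<Sum>i=0..j. (-1) ^ (j - i) * int ((cdim \<Delta> - i) choose (j - i)) * int (nfaces \<Delta> i))
                 [0..<cdim \<Delta> + 1]"

definition strip_zeros :: "int list \<Rightarrow> int list" where
  "strip_zeros xs = rev (dropWhile (\<lambda>x. x = 0) (rev xs))"

end

theory Submission
  imports Defs
begin

text \<open>
  Given a bipartite graph G on n vertices we attach a pendant vertex (a whisker) j + n
  to every vertex j, after relabelling the vertices of G as 0, ..., n - 1.  The whiskered
  graph H is again bipartite, and we prove:

  More generally, the complexes obtained from Ind(G)
    by whiskering only the vertices of a set C, and adding a set Z of isolated whisker
    vertices, are pure and closed under taking the link and the deletion of a vertex of C;
    induction on the size of C then gives vertex-decomposability.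
  \<^item> The faces of Ind(H) are the sets S \<union> T' with S independent in G and T' a set of
    whiskers of vertices outside S.  Hence f_i(Ind H) = \<Sum>_S C(n - |S|, i - |S|), and a
    binomial inversion turns the h-vector of Ind(H), a complex of dimension n - 1, into the
    f-vector of Ind(G) padded with zeros.
\<close>

text \<open>The alternating sum of a row of Pascal's triangle is (1 - 1)^m.\<close>
lemma alternating_binomial_sum:
  "(\<Sum>k=0..m. (-1::int)^(m-k) * int (m choose k)) = (if m = 0 then 1 else 0)"
proof -
  have "(\<Sum>k=0..m. (-1::int)^(m-k) * int (m choose k)) = (1 + (-1::int))^m"
    using binomial_ring[of "1::int" "-1" m] by (simp add: atLeast0AtMost mult.commute)
  then show ?thesis by simp
qed

text \<open>The inversion formula behind the h-vector computation: the matrices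
  (C(n - s, i - s)) and ((-1)^(j - i) C(n - i, j - i)) are inverse to each other.\<close>
lemma binomial_inversion_kernel:
  assumes "s \<le> n" "j \<le> n"
  shows "(\<Sum>i=0..j. (-1::int)^(j-i) * int ((n-i) choose (j-i)) * int (if s \<le> i then (n-s) choose (i-s) else 0))
         = (if s = j then 1 else 0)"
proof (cases "s \<le> j")
  case False
  then show ?thesis by (intro trans[OF sum.neutral]) auto
next
  case True
  define m where "m = j - s"
  define N where "N = n - s"
  have mN: "m \<le> N" using assms True by (simp add: m_def N_def)
  have "(\<Sum>i=0..j. (-1::int)^(j-i) * int ((n-i) choose (j-i)) * int (if s \<le> i then (n-s) choose (i-s) else 0))
       = (\<Sum>i=s..j. (-1::int)^(j-i) * int ((n-i) choose (j-i)) * int (if s \<le> i then (n-s) choose (i-s) else 0))"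
    by (rule sum.mono_neutral_right) auto
  also have "\<dots> = (\<Sum>k=0..m. (-1::int)^(j-(k+s)) * int ((n-(k+s)) choose (j-(k+s))) * int ((n-s) choose (k+s-s)))"
    using sum.shift_bounds_cl_nat_ivl[of "\<lambda>i. (-1::int)^(j-i) * int ((n-i) choose (j-i)) * int (if s \<le> i then (n-s) choose (i-s) else 0)" 0 s m]
    using True by (simp add: m_def)
  also have "\<dots> = (\<Sum>k=0..m. int (N choose m) * ((-1::int)^(m-k) * int (m choose k)))"
  proof (rule sum.cong)
    fix k assume k: "k \<in> {0..m}"
    have "(N choose m) * (m choose k) = (N choose k) * ((N-k) choose (m-k))"
      using choose_mult[of k m N] k mN by simp
    moreover have "j-(k+s) = m-k" "n-(k+s) = N-k" "k+s-s = k" using True assms by (auto simp: m_def N_def)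
    ultimately show "(-1::int)^(j-(k+s)) * int ((n-(k+s)) choose (j-(k+s))) * int ((n-s) choose (k+s-s))
        = int (N choose m) * ((-1::int)^(m-k) * int (m choose k))"
      unfolding N_def[symmetric] by (simp add: algebra_simps flip: of_nat_mult)
  qed simp
  also have "\<dots> = int (N choose m) * (if m = 0 then 1 else 0)"
    by (simp add: sum_distrib_left[symmetric] alternating_binomial_sum)
  finally show ?thesis using True by (simp add: m_def)
qed

lemma strip_zeros_map:
  fixes g :: "nat \<Rightarrow> int"
  assumes "m \<le> N" "g m \<noteq> 0" "\<And>k. m < k \<Longrightarrow> k \<le> N \<Longrightarrow> g k = 0"
  shows "strip_zeros (map g [0..<N+1]) = map g [0..<m+1]"
proof -
  have split: "[0..<N+1] = [0..<m+1] @ [m+1..<N+1]"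
    using upt_add_eq_append[of 0 "m+1" "N - m"] assms(1) by simp
  have tail: "\<forall>x\<in>set (map g [m+1..<N+1]). x = 0" using assms(3) by auto
  show ?thesis
    unfolding strip_zeros_def split using tail assms(2) by (simp add: dropWhile_append)
qed

lemma strip_zeros_padded_fvec:
  assumes fin: "finite \<Delta>" and empty: "{} \<in> \<Delta>" and dim: "cdim \<Delta> \<le> N"
  shows "strip_zeros (map (\<lambda>k. int (nfaces \<Delta> k)) [0..<N+1]) = map int (fvec \<Delta>)"
proof -
  define d where "d = cdim \<Delta>"
  have card_le: "card F \<le> d" if "F \<in> \<Delta>" for F
    using fin that unfolding d_def cdim_def by simp
  have "d \<in> card ` \<Delta>"
    using fin empty unfolding d_def cdim_def by (intro Max_in) auto
  then obtain F where "F \<in> \<Delta>" "card F = d" by blast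
  then have top: "nfaces \<Delta> d \<noteq> 0"
    using fin unfolding nfaces_def by auto
  have above: "nfaces \<Delta> k = 0" if "d < k" for k
  proof -
    have "{F \<in> \<Delta>. card F = k} = {}" using card_le that by fastforce
    then show ?thesis unfolding nfaces_def by (metis card.empty)
  qed
  have "strip_zeros (map (\<lambda>k. int (nfaces \<Delta> k)) [0..<N+1]) = map (\<lambda>k. int (nfaces \<Delta> k)) [0..<d+1]"
    by (rule strip_zeros_map) (use dim top above in \<open>auto simp: d_def\<close>)
  then show ?thesis unfolding fvec_def d_def by simp
qed

lemma nfaces_relabel:
  assumes "inj_on f (\<Union>\<Delta>)"
  shows "nfaces ((`) f ` \<Delta>) k = nfaces \<Delta> k"
proof -
  have card_eq: "card (f ` S) = card S" if "S \<in> \<Delta>" for S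
    using card_image inj_on_subset[OF assms] that by blast
  have inj: "inj_on ((`) f) \<Delta>"
    using inj_on_subset[OF inj_on_image_Pow[OF assms]] by blast
  have "{X \<in> (`) f ` \<Delta>. card X = k} = (`) f ` {S \<in> \<Delta>. card S = k}"
    using card_eq by auto
  then show ?thesis
    unfolding nfaces_def using card_image[OF inj_on_subset[OF inj]] by simp
qed

lemma cdim_relabel:
  assumes "inj_on f (\<Union>\<Delta>)"
  shows "cdim ((`) f ` \<Delta>) = cdim \<Delta>"
proof -
  have card_eq: "card (f ` S) = card S" if "S \<in> \<Delta>" for S
    using card_image inj_on_subset[OF assms] that by blast
  have "card ` (`) f ` \<Delta> = (\<lambda>S. card (f ` S)) ` \<Delta>" by (simp add: image_image)
  also have "\<dots> = card ` \<Delta>" by (rule image_cong) (use card_eq in auto)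
  finally show ?thesis unfolding cdim_def by simp
qed

lemma Ind_relabel:
  assumes inj: "inj_on f V" and E: "\<forall>e\<in>E. e \<subseteq> V"
  shows "Ind (f ` V) ((`) f ` E) = (`) f ` Ind V E"
proof (intro equalityI subsetI)
  fix X assume X: "X \<in> Ind (f ` V) ((`) f ` E)"
  define S where "S = V \<inter> f -` X"
  have XS: "X = f ` S" using X unfolding S_def Ind_def by auto
  have "S \<in> Ind V E"
    using X unfolding Ind_def S_def by (auto simp: image_subset_iff_subset_vimage)
  then show "X \<in> (`) f ` Ind V E" using XS by blast
next
  fix X assume "X \<in> (`) f ` Ind V E"
  then obtain S where S: "S \<in> Ind V E" and XS: "X = f ` S" by blast
  have SV: "S \<subseteq> V" using S unfolding Ind_def by blast
  have "e \<subseteq> S" if "e \<in> E" "f ` e \<subseteq> f ` S" for e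
  proof
    fix x assume "x \<in> e"
    then have "x \<in> V" "f x \<in> f ` S" using that E by auto
    then show "x \<in> S" using inj_on_image_mem_iff[OF inj] SV by blast
  qed
  then show "X \<in> Ind (f ` V) ((`) f ` E)" using S SV XS unfolding Ind_def by auto
qed

lemma fvec_Ind_relabel:
  assumes inj: "inj_on f V" and E: "\<forall>e\<in>E. e \<subseteq> V"
  shows "fvec (Ind (f ` V) ((`) f ` E)) = fvec (Ind V E)"
proof -
  have "\<Union>(Ind V E) \<subseteq> V" unfolding Ind_def by blast
  then have inj_faces: "inj_on f (\<Union>(Ind V E))" by (rule inj_on_subset[OF inj])
  have "nfaces ((`) f ` Ind V E) = nfaces (Ind V E)"
    using nfaces_relabel[OF inj_faces] by (rule ext)
  then show ?thesis
    unfolding Ind_relabel[OF assms] fvec_def cdim_relabel[OF inj_faces] by simp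
qed

lemma simple_graph_relabel:
  assumes inj: "inj_on f V" and G: "simple_graph V E"
  shows "simple_graph (f ` V) ((`) f ` E)"
proof -
  have "f ` e \<subseteq> f ` V \<and> card (f ` e) = 2" if "e \<in> E" for e
    using G that card_image[OF inj_on_subset[OF inj]] unfolding simple_graph_def
    by (metis image_mono)
  then show ?thesis using G unfolding simple_graph_def by auto
qed

lemma bipartite_relabel:
  assumes inj: "inj_on f V" and E: "\<forall>e\<in>E. e \<subseteq> V" and bip: "bipartite V E"
  shows "bipartite (f ` V) ((`) f ` E)"
proof -
  obtain A where A: "A \<subseteq> V" "\<forall>e\<in>E. card (e \<inter> A) = 1"
    using bip unfolding bipartite_def by blast
  have "card (f ` e \<inter> f ` A) = 1" if "e \<in> E" for e
  proof -
    have "f ` e \<inter> f ` A = f ` (e \<inter> A)"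
      using inj_on_image_Int[OF inj] E A(1) that by blast
    moreover have "e \<inter> A \<subseteq> V" using A(1) by blast
    ultimately show ?thesis
      using card_image[OF inj_on_subset[OF inj]] A(2) that by simp
  qed
  then show ?thesis
    unfolding bipartite_def
  proof (intro exI[of _ "f ` A"] conjI ballI)
    show "f ` A \<subseteq> f ` V" using A(1) by blast
  qed auto
qed

text \<open>A simple graph G with vertex set {..<n}; its whiskers live on {n..<2n}.\<close>
locale nat_graph =
  fixes n :: nat and E0 :: "nat set set"
  assumes simple: "simple_graph {..<n} E0"
begin

lemma edge_props: "e \<in> E0 \<Longrightarrow> e \<subseteq> {..<n} \<and> card e = 2"
  using simple unfolding simple_graph_def by blast

lemma edge_low: "e \<in> E0 \<Longrightarrow> x \<in> e \<Longrightarrow> x < n"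
  using edge_props by blast

lemma edge_not_single: "e \<in> E0 \<Longrightarrow> \<not> e \<subseteq> {i}"
  using edge_props card_mono[of "{i}" e] by fastforce

lemma edge_pair:
  assumes "e \<in> E0" "i \<in> e"
  obtains j where "e = {i, j}" "j \<noteq> i"
  using edge_props[OF assms(1)] assms(2) by (auto simp: card_2_iff)

abbreviation shift :: "nat set \<Rightarrow> nat set" where
  "shift T \<equiv> (\<lambda>j. j + n) ` T"

definition nbr :: "nat \<Rightarrow> nat set" where
  "nbr i = {j. {i, j} \<in> E0}"

text \<open>The partially whiskered complex: independent sets of G on the vertices C, together
  with whiskers of the vertices in C (which exclude their base vertex) and the free vertices
  Z.  It is Ind(H) for C = {..<n}, Z = {}, and deletions and links stay in this family.\<close>
definition wcomplex :: "nat set \<Rightarrow> nat set \<Rightarrow> nat set set" where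
  "wcomplex C Z = {X. X \<subseteq> C \<union> shift C \<union> Z \<and> (\<forall>e\<in>E0. \<not> e \<subseteq> X) \<and> (\<forall>j\<in>C. \<not> (j \<in> X \<and> j + n \<in> X))}"

definition admissible :: "nat set \<Rightarrow> nat set \<Rightarrow> bool" where
  "admissible C Z \<longleftrightarrow> C \<subseteq> {..<n} \<and> Z \<subseteq> {n..<2*n} \<and> (\<forall>j\<in>C. j + n \<notin> Z)"

lemma admissible_finite: "admissible C Z \<Longrightarrow> finite C \<and> finite Z"
  unfolding admissible_def by (meson finite_atLeastLessThan finite_lessThan finite_subset)

lemma face_cover:
  assumes "admissible C Z" "X \<in> wcomplex C Z"
  shows "X \<subseteq> Z \<union> (X \<inter> C) \<union> shift (C - X)"
proof
  fix x assume x: "x \<in> X"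
  have "x \<in> C \<union> shift C \<union> Z" and whisker: "\<forall>j\<in>C. \<not> (j \<in> X \<and> j + n \<in> X)"
    using assms(2) x unfolding wcomplex_def by auto
  then show "x \<in> Z \<union> (X \<inter> C) \<union> shift (C - X)" using x by blast
qed

lemma card_cover:
  assumes adm: "admissible C Z"
  shows "card (Z \<union> (Y \<inter> C) \<union> shift (C - Y)) = card Z + card C"
proof -
  have fin: "finite C" "finite Z" using admissible_finite[OF adm] by auto
  have low: "C \<subseteq> {..<n}" and high: "Z \<subseteq> {n..<2*n}" and apart: "\<forall>j\<in>C. j + n \<notin> Z"
    using adm unfolding admissible_def by auto
  have "card (Z \<union> (Y \<inter> C) \<union> shift (C - Y)) = card (Z \<union> (Y \<inter> C)) + card (shift (C - Y))"
    using fin low apart by (intro card_Un_disjoint) auto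
  also have "card (Z \<union> (Y \<inter> C)) = card Z + card (Y \<inter> C)"
    using fin low high by (intro card_Un_disjoint) (auto, fastforce)
  also have "card (shift (C - Y)) = card (C - Y)"
    by (rule card_image) (simp add: inj_on_def)
  finally show ?thesis
    using card_Int_Diff[OF fin(1), of Y] by (simp add: Int_commute)
qed

lemma face_card_le:
  assumes adm: "admissible C Z" and X: "X \<in> wcomplex C Z"
  shows "card X \<le> card C + card Z"
proof -
  have "finite (Z \<union> (X \<inter> C) \<union> shift (C - X))" using admissible_finite[OF adm] by simp
  then show ?thesis
    using card_mono[OF _ face_cover[OF adm X]] card_cover[OF adm] by simp
qed

lemma face_subset: "Y \<in> wcomplex C Z \<Longrightarrow> X \<subseteq> Y \<Longrightarrow> X \<in> wcomplex C Z"
  unfolding wcomplex_def by blast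

lemma insert_upper_face:
  assumes adm: "admissible C Z" and X: "X \<in> wcomplex C Z"
    and x: "x \<in> shift C \<union> Z" and free: "x - n \<in> C \<Longrightarrow> x - n \<notin> X"
  shows "insert x X \<in> wcomplex C Z"
proof -
  have upper: "n \<le> x" using adm x unfolding admissible_def by auto
  have "\<not> e \<subseteq> insert x X" if "e \<in> E0" for e
    using X that edge_low[OF that] upper unfolding wcomplex_def by fastforce
  moreover have "\<not> (j \<in> insert x X \<and> j + n \<in> insert x X)" if j: "j \<in> C" for j
  proof -
    have "j < n" using adm j unfolding admissible_def by auto
    then show ?thesis using X j free upper unfolding wcomplex_def by (cases "j + n = x") auto
  qed
  moreover have "insert x X \<subseteq> C \<union> shift C \<union> Z" using X x unfolding wcomplex_def by blast
  ultimately show ?thesis unfolding wcomplex_def by blast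
qed

text \<open>Facets are maximal, hence contain Z and one of j, j + n for each j in C; so the
  complex is pure of size |C| + |Z|.\<close>
lemma facet_card:
  assumes adm: "admissible C Z" and F: "F \<in> facets (wcomplex C Z)"
  shows "card F = card C + card Z"
proof -
  have face: "F \<in> wcomplex C Z" and maximal: "\<And>G. G \<in> wcomplex C Z \<Longrightarrow> F \<subseteq> G \<Longrightarrow> G = F"
    using F unfolding facets_def by auto
  have "z \<in> F" if "z \<in> Z" for z
  proof -
    have "z - n \<notin> C" using adm that unfolding admissible_def by force
    then show ?thesis using maximal[OF insert_upper_face[OF adm face]] that by blast
  qed
  moreover have "j + n \<in> F" if "j \<in> C" "j \<notin> F" for j
    using maximal[OF insert_upper_face[OF adm face, of "j + n"]] that by auto
  ultimately have "Z \<union> (F \<inter> C) \<union> shift (C - F) \<subseteq> F" by auto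
  then have "F = Z \<union> (F \<inter> C) \<union> shift (C - F)" using face_cover[OF adm face] by blast
  then show ?thesis using card_cover[OF adm, of F] by simp
qed

lemma pure_wcomplex: "admissible C Z \<Longrightarrow> pure (wcomplex C Z)"
  unfolding pure_def using facet_card by simp

lemma singleton_face: "admissible C Z \<Longrightarrow> i \<in> C \<Longrightarrow> {i} \<in> wcomplex C Z"
  unfolding wcomplex_def admissible_def using edge_not_single by (auto simp: subset_iff)

lemma wcomplex_simplex:
  assumes "admissible {} Z"
  shows "wcomplex {} Z = Pow Z"
proof -
  have "\<not> e \<subseteq> X" if e: "e \<in> E0" and X: "X \<subseteq> Z" for e X
  proof -
    obtain x where "x \<in> e" using edge_props[OF e] by fastforce
    then show ?thesis using edge_low[OF e] X assms unfolding admissible_def by force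
  qed
  then show ?thesis unfolding wcomplex_def by auto
qed

lemma del_wcomplex:
  assumes adm: "admissible C Z" and i: "i \<in> C"
  shows "del (wcomplex C Z) i = wcomplex (C - {i}) (insert (i + n) Z)"
proof -
  have "i < n" "\<forall>z\<in>Z. n \<le> z" using adm i unfolding admissible_def by auto
  then have "i \<notin> insert (i + n) (C - {i} \<union> shift (C - {i}) \<union> Z)" by auto
  then show ?thesis
    using i unfolding del_def wcomplex_def by blast
qed

lemma admissible_del: "admissible C Z \<Longrightarrow> i \<in> C \<Longrightarrow> admissible (C - {i}) (insert (i + n) Z)"
  unfolding admissible_def by auto

lemma link_wcomplex_iff:
  assumes adm: "admissible C Z" and i: "i \<in> C"
  shows "X \<in> link (wcomplex C Z) i \<longleftrightarrow> X \<in> wcomplex C Z \<and> i \<notin> X \<and> i + n \<notin> X \<and> X \<inter> nbr i = {}"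
proof -
  have i_low: "i < n" using adm i unfolding admissible_def by auto
  have "insert i X \<in> wcomplex C Z \<longleftrightarrow> X \<in> wcomplex C Z \<and> i + n \<notin> X \<and> X \<inter> nbr i = {}"
  proof
    assume ins: "insert i X \<in> wcomplex C Z"
    have "X \<in> wcomplex C Z" using face_subset[OF ins] by blast
    moreover have "i + n \<notin> X" using ins i unfolding wcomplex_def by auto
    moreover have "{i, j} \<notin> E0" if "j \<in> X" for j
      using ins that unfolding wcomplex_def by auto
    then have "X \<inter> nbr i = {}" unfolding nbr_def by auto
    ultimately show "X \<in> wcomplex C Z \<and> i + n \<notin> X \<and> X \<inter> nbr i = {}" by blast
  next
    assume X: "X \<in> wcomplex C Z \<and> i + n \<notin> X \<and> X \<inter> nbr i = {}"
    have "\<not> e \<subseteq> insert i X" if e: "e \<in> E0" for e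
    proof
      assume sub: "e \<subseteq> insert i X"
      show False
      proof (cases "i \<in> e")
        case True
        then obtain j where "e = {i, j}" "j \<noteq> i" using edge_pair[OF e] by blast
        then show False using sub X e unfolding nbr_def by auto
      next
        case False
        then show False using sub X e unfolding wcomplex_def by blast
      qed
    qed
    then show "insert i X \<in> wcomplex C Z" using X i i_low unfolding wcomplex_def by auto
  qed
  then show ?thesis unfolding link_def by blast
qed

lemma wcomplex_link_iff:
  assumes adm: "admissible C Z" and i: "i \<in> C"
  shows "X \<in> wcomplex (C - insert i (nbr i)) (Z \<union> shift (C \<inter> nbr i))
     \<longleftrightarrow> X \<in> wcomplex C Z \<and> i \<notin> X \<and> i + n \<notin> X \<and> X \<inter> nbr i = {}"
    (is "X \<in> wcomplex ?C ?Z \<longleftrightarrow> _")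
proof -
  have low: "C \<subseteq> {..<n}" and high: "\<forall>z\<in>Z. n \<le> z" and apart: "\<forall>j\<in>C. j + n \<notin> Z"
    using adm unfolding admissible_def by auto
  have nbr_low: "\<forall>j\<in>nbr i. j < n" using edge_low unfolding nbr_def by blast
  have not_self: "i \<notin> nbr i" using edge_not_single[of "{i, i}" i] unfolding nbr_def by auto
  show ?thesis
  proof
    assume X: "X \<in> wcomplex ?C ?Z"
    have sub: "X \<subseteq> ?C \<union> shift ?C \<union> ?Z" and edges: "\<forall>e\<in>E0. \<not> e \<subseteq> X"
      and whiskers: "\<forall>j\<in>?C. \<not> (j \<in> X \<and> j + n \<in> X)"
      using X unfolding wcomplex_def by auto
    have lower: "x \<in> ?C" if "x \<in> X" "x < n" for x
      using sub that high by force
    have "\<not> (j \<in> X \<and> j + n \<in> X)" if "j \<in> C" for j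
      using whiskers lower that low by blast
    moreover have "X \<subseteq> C \<union> shift C \<union> Z" using sub by blast
    ultimately have "X \<in> wcomplex C Z" using edges unfolding wcomplex_def by blast
    moreover have "i \<notin> X" using lower i low by blast
    moreover have "i + n \<notin> X" using sub i low apart not_self by auto
    moreover have "X \<inter> nbr i = {}" using lower nbr_low by blast
    ultimately show "X \<in> wcomplex C Z \<and> i \<notin> X \<and> i + n \<notin> X \<and> X \<inter> nbr i = {}" by blast
  next
    assume X: "X \<in> wcomplex C Z \<and> i \<notin> X \<and> i + n \<notin> X \<and> X \<inter> nbr i = {}"
    have "x \<in> ?C \<union> shift ?C \<union> ?Z" if x: "x \<in> X" for x
    proof -
      have "x \<in> C \<union> shift C \<union> Z" using X x unfolding wcomplex_def by blast
      then consider "x \<in> C" | "x \<in> Z" | j where "j \<in> C" "x = j + n" by blast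
      then show ?thesis
      proof cases
        case 1
        then show ?thesis using X x by blast
      next
        case 2
        then show ?thesis by blast
      next
        case 3
        then show ?thesis using X x by (cases "j \<in> nbr i") auto
      qed
    qed
    then show "X \<in> wcomplex ?C ?Z" using X unfolding wcomplex_def by blast
  qed
qed

lemma link_wcomplex:
  assumes "admissible C Z" "i \<in> C"
  shows "link (wcomplex C Z) i = wcomplex (C - insert i (nbr i)) (Z \<union> shift (C \<inter> nbr i))"
  using link_wcomplex_iff[OF assms] wcomplex_link_iff[OF assms] by blast

lemma admissible_link:
  "admissible C Z \<Longrightarrow> i \<in> C \<Longrightarrow> admissible (C - insert i (nbr i)) (Z \<union> shift (C \<inter> nbr i))"
  unfolding admissible_def by auto

lemma vd_wcomplex: "admissible C Z \<Longrightarrow> vertex_decomposable (wcomplex C Z)"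
proof (induction "card C" arbitrary: C Z rule: less_induct)
  case less
  have fin: "finite C" "finite Z" using admissible_finite[OF less.prems] by auto
  show ?case
  proof (cases "C = {}")
    case True
    then have "wcomplex C Z = Pow Z" using wcomplex_simplex less.prems by simp
    then show ?thesis using fin pure_wcomplex[OF less.prems]
      by (intro vertex_decomposable.simplex) (auto simp: is_simplex_def)
  next
    case False
    then obtain i where i: "i \<in> C" by auto
    have smaller_link: "card (C - insert i (nbr i)) < card C"
      using i fin by (intro psubset_card_mono) auto
    have smaller_del: "card (C - {i}) < card C"
      using i fin by (intro psubset_card_mono) auto
    show ?thesis
    proof (rule vertex_decomposable.decomp[of _ i])
      show "pure (wcomplex C Z)" using pure_wcomplex less.prems by simp
      show "{i} \<in> wcomplex C Z" using singleton_face less.prems i by simp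
      show "pure (link (wcomplex C Z) i)" "vertex_decomposable (link (wcomplex C Z) i)"
        using link_wcomplex[OF less.prems i] pure_wcomplex admissible_link[OF less.prems i]
          less.hyps[OF smaller_link] by auto
      show "pure (del (wcomplex C Z) i)" "vertex_decomposable (del (wcomplex C Z) i)"
        using del_wcomplex[OF less.prems i] pure_wcomplex admissible_del[OF less.prems i]
          less.hyps[OF smaller_del] by auto
    qed
  qed
qed

abbreviation IndG :: "nat set set" where
  "IndG \<equiv> Ind {..<n} E0"

abbreviation whisker_complex :: "nat set set" where
  "whisker_complex \<equiv> wcomplex {..<n} {}"

lemma admissible_whisker: "admissible {..<n} {}"
  by (simp add: admissible_def)

lemma empty_in_IndG: "{} \<in> IndG"
  using edge_not_single unfolding Ind_def by blast

lemma card_IndG: "S \<in> IndG \<Longrightarrow> card S \<le> n"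
  unfolding Ind_def by (auto dest: card_mono[rotated])

lemma lower_part: "S \<subseteq> {..<n} \<Longrightarrow> (S \<union> shift T) \<inter> {..<n} = S"
  by auto

lemma upper_part: "S \<subseteq> {..<n} \<Longrightarrow> (S \<union> shift T) - {..<n} = shift T"
  by auto

lemma card_lower_upper:
  assumes "S \<subseteq> {..<n}" "finite T"
  shows "card (S \<union> shift T) = card S + card T"
proof -
  have "card (S \<union> shift T) = card S + card (shift T)"
    using assms finite_subset by (intro card_Un_disjoint) auto
  then show ?thesis by (simp add: card_image inj_on_def)
qed

lemma whisker_face_iff:
  "X \<in> whisker_complex \<longleftrightarrow> (\<exists>S\<in>IndG. \<exists>T. T \<subseteq> {..<n} - S \<and> X = S \<union> shift T)"
proof
  assume X: "X \<in> whisker_complex"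
  define S where "S = X \<inter> {..<n}"
  define T where "T = {j \<in> {..<n}. j + n \<in> X}"
  have "S \<in> IndG" using X unfolding Ind_def wcomplex_def S_def by auto
  moreover have "T \<subseteq> {..<n} - S" using X unfolding wcomplex_def S_def T_def by auto
  moreover have "X = S \<union> shift T" using X unfolding wcomplex_def S_def T_def by auto
  ultimately show "\<exists>S\<in>IndG. \<exists>T. T \<subseteq> {..<n} - S \<and> X = S \<union> shift T" by blast
next
  assume "\<exists>S\<in>IndG. \<exists>T. T \<subseteq> {..<n} - S \<and> X = S \<union> shift T"
  then obtain S T where S: "S \<in> IndG" and T: "T \<subseteq> {..<n} - S" and X: "X = S \<union> shift T"
    by blast
  have "\<not> e \<subseteq> X" if "e \<in> E0" for e
  proof
    assume "e \<subseteq> X"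
    then have "e \<subseteq> S" using edge_low[OF that] X by auto
    then show False using S that unfolding Ind_def by blast
  qed
  then show "X \<in> whisker_complex" using S T X unfolding Ind_def wcomplex_def by auto
qed

definition extensions :: "nat set \<Rightarrow> nat \<Rightarrow> nat set set" where
  "extensions S i = (\<lambda>T. S \<union> shift T) ` {T. T \<subseteq> {..<n} - S \<and> card S + card T = i}"

lemma faces_as_extensions: "{X \<in> whisker_complex. card X = i} = (\<Union>S\<in>IndG. extensions S i)"
proof -
  have "card (S \<union> shift T) = card S + card T" if "S \<in> IndG" "T \<subseteq> {..<n} - S" for S T
    using that finite_subset[of T "{..<n}"] unfolding Ind_def by (intro card_lower_upper) auto
  then show ?thesis unfolding extensions_def whisker_face_iff by auto
qed

lemma extensions_disjoint:
  assumes "S1 \<in> IndG" "S2 \<in> IndG" "S1 \<noteq> S2"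
  shows "extensions S1 i \<inter> extensions S2 i = {}"
proof -
  have low: "S1 \<subseteq> {..<n}" "S2 \<subseteq> {..<n}" using assms(1,2) unfolding Ind_def by auto
  have "S1 = S2" if X: "X \<in> extensions S1 i" "X \<in> extensions S2 i" for X
  proof -
    obtain T1 T2 where "X = S1 \<union> shift T1" "X = S2 \<union> shift T2"
      using X unfolding extensions_def by blast
    then show ?thesis using lower_part[OF low(1)] lower_part[OF low(2)] by metis
  qed
  then show ?thesis using assms(3) by blast
qed

lemma card_extensions:
  assumes S: "S \<in> IndG"
  shows "card (extensions S i) = (if card S \<le> i then (n - card S) choose (i - card S) else 0)"
proof -
  have low: "S \<subseteq> {..<n}" using S unfolding Ind_def by blast
  have "inj (\<lambda>T. S \<union> shift T)"
  proof (rule injI)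
    fix T1 T2 assume "S \<union> shift T1 = S \<union> shift T2"
    then have "shift T1 = shift T2" using upper_part[OF low] by metis
    then show "T1 = T2" by (simp add: inj_image_eq_iff inj_def)
  qed
  then have "card (extensions S i) = card {T. T \<subseteq> {..<n} - S \<and> card S + card T = i}"
    unfolding extensions_def by (simp add: card_image inj_on_subset)
  also have "\<dots> = (if card S \<le> i then (n - card S) choose (i - card S) else 0)"
  proof (cases "card S \<le> i")
    case True
    then have "{T. T \<subseteq> {..<n} - S \<and> card S + card T = i} = {T. T \<subseteq> {..<n} - S \<and> card T = i - card S}"
      by auto
    moreover have "card ({..<n} - S) = n - card S"
      using low by (simp add: card_Diff_subset finite_subset)
    ultimately show ?thesis using True n_subsets[of "{..<n} - S" "i - card S"] by simp
  qed auto
  finally show ?thesis .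
qed

lemma nfaces_whisker:
  "nfaces whisker_complex i = (\<Sum>S\<in>IndG. if card S \<le> i then (n - card S) choose (i - card S) else 0)"
proof -
  have fin_ext: "finite (extensions S i)" for S
    unfolding extensions_def by simp
  have "nfaces whisker_complex i = card (\<Union>S\<in>IndG. extensions S i)"
    unfolding nfaces_def faces_as_extensions ..
  also have "\<dots> = (\<Sum>S\<in>IndG. card (extensions S i))"
    using extensions_disjoint fin_ext by (intro card_UN_disjoint) (auto simp: Ind_def)
  also have "\<dots> = (\<Sum>S\<in>IndG. if card S \<le> i then (n - card S) choose (i - card S) else 0)"
    using card_extensions by (intro sum.cong) auto
  finally show ?thesis .
qed

lemma cdim_whisker: "cdim whisker_complex = n"
proof -
  have fin: "finite whisker_complex"
    unfolding wcomplex_def by (rule finite_subset[of _ "Pow ({..<n} \<union> shift {..<n})"]) auto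
  have "shift {..<n} \<in> whisker_complex" using whisker_face_iff empty_in_IndG by blast
  moreover have "card (shift {..<n}) = n" by (simp add: card_image inj_on_def)
  moreover have "card X \<le> n" if "X \<in> whisker_complex" for X
    using face_card_le[OF admissible_whisker that] by simp
  ultimately show ?thesis unfolding cdim_def using fin by (intro Max_eqI) (auto, metis image_eqI)
qed

lemma hvec_whisker: "hvec whisker_complex = map (\<lambda>j. int (nfaces IndG j)) [0..<n+1]"
  unfolding hvec_def cdim_whisker
proof (rule map_cong[OF refl])
  fix j assume "j \<in> set [0..<n+1]"
  then have j: "j \<le> n" by auto
  have "(\<Sum>i=0..j. (-1::int)^(j-i) * int ((n-i) choose (j-i)) * int (nfaces whisker_complex i))
      = (\<Sum>S\<in>IndG. \<Sum>i=0..j. (-1::int)^(j-i) * int ((n-i) choose (j-i))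
           * int (if card S \<le> i then (n - card S) choose (i - card S) else 0))"
    by (simp add: nfaces_whisker sum_distrib_left sum.swap[of _ "{0..j}"])
  also have "\<dots> = (\<Sum>S\<in>IndG. if card S = j then 1 else 0)"
    using binomial_inversion_kernel card_IndG j by (intro sum.cong) auto
  also have "\<dots> = int (nfaces IndG j)"
    unfolding nfaces_def by (simp add: sum.inter_filter[symmetric] Ind_def)
  finally show "(\<Sum>i=0..j. (-1::int)^(j-i) * int ((n-i) choose (j-i)) * int (nfaces whisker_complex i))
      = int (nfaces IndG j)" .
qed

definition whisker_vertices :: "nat set" where
  "whisker_vertices = {..<n} \<union> shift {..<n}"

definition whisker_edges :: "nat set set" where
  "whisker_edges = E0 \<union> {{j, j + n} | j. j < n}"

lemma Ind_whisker: "Ind whisker_vertices whisker_edges = whisker_complex"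
proof -
  have edges_iff: "(\<forall>e\<in>whisker_edges. \<not> e \<subseteq> X)
      \<longleftrightarrow> (\<forall>e\<in>E0. \<not> e \<subseteq> X) \<and> (\<forall>j\<in>{..<n}. \<not> (j \<in> X \<and> j + n \<in> X))" for X
    unfolding whisker_edges_def ball_Un by auto
  show ?thesis
    unfolding Ind_def wcomplex_def whisker_vertices_def Un_empty_right by (simp only: edges_iff)
qed

lemma simple_graph_whisker: "simple_graph whisker_vertices whisker_edges"
proof -
  have "{j, j + n} \<subseteq> whisker_vertices \<and> card {j, j + n} = 2" if "j < n" for j
    using that unfolding whisker_vertices_def by auto
  then show ?thesis
    using edge_props unfolding simple_graph_def whisker_vertices_def whisker_edges_def by blast
qed

text \<open>A bipartition A of G extends to H by putting the whiskers of the vertices outside A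
  into A.\<close>
lemma bipartite_whisker:
  assumes "bipartite {..<n} E0"
  shows "bipartite whisker_vertices whisker_edges"
proof -
  obtain A where A: "A \<subseteq> {..<n}" "\<forall>e\<in>E0. card (e \<inter> A) = 1"
    using assms unfolding bipartite_def by blast
  define B where "B = A \<union> shift ({..<n} - A)"
  have "card (e \<inter> B) = 1" if "e \<in> E0" for e
  proof -
    have "e \<inter> B = e \<inter> A" using edge_props[OF that] unfolding B_def by auto
    then show ?thesis using A that by simp
  qed
  moreover have "card ({j, j + n} \<inter> B) = 1" if "j < n" for j
  proof (cases "j \<in> A")
    case True
    then have "{j, j + n} \<inter> B = {j}" using A unfolding B_def by auto
    then show ?thesis by simp
  next
    case False
    then have "{j, j + n} \<inter> B = {j + n}" using A that unfolding B_def by auto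
    then show ?thesis by simp
  qed
  moreover have "B \<subseteq> whisker_vertices" using A unfolding B_def whisker_vertices_def by auto
  ultimately show ?thesis unfolding bipartite_def whisker_edges_def by blast
qed

lemma hvec_whisker_graph:
  "strip_zeros (hvec (Ind whisker_vertices whisker_edges)) = map int (fvec IndG)"
proof -
  have "cdim IndG \<le> n"
    unfolding cdim_def using card_IndG empty_in_IndG by (subst Max_le_iff) (auto simp: Ind_def)
  then show ?thesis
    unfolding Ind_whisker hvec_whisker
    by (intro strip_zeros_padded_fvec empty_in_IndG) (simp add: Ind_def)
qed

end

theorem corollary4p15:
  fixes V :: "'a set" and E :: "'a set set"
  assumes "simple_graph V E" and "bipartite V E"
  shows "\<exists>(W :: nat set) F. simple_graph W F \<and> bipartite W F
           \<and> vertex_decomposable (Ind W F)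
           \<and> strip_zeros (hvec (Ind W F)) = map int (fvec (Ind V E))"
proof -
  have fin: "finite V" and edges: "\<forall>e\<in>E. e \<subseteq> V"
    using assms(1) unfolding simple_graph_def by auto
  obtain f where "bij_betw f V {0..<card V}"
    using ex_bij_betw_finite_nat[OF fin] by blast
  then have inj: "inj_on f V" and range: "f ` V = {..<card V}"
    by (auto simp: bij_betw_def atLeast0LessThan)
  define E0 where "E0 = (`) f ` E"
  interpret nat_graph "card V" E0
    using simple_graph_relabel[OF inj assms(1)] range unfolding E0_def by unfold_locales simp
  have bip: "bipartite {..<card V} E0"
    using bipartite_relabel[OF inj edges assms(2)] range unfolding E0_def by simp
  have same_fvec: "fvec IndG = fvec (Ind V E)"
    using fvec_Ind_relabel[OF inj edges] range unfolding E0_def by simp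
  show ?thesis
  proof (intro exI conjI)
    show "simple_graph whisker_vertices whisker_edges" by (rule simple_graph_whisker)
    show "bipartite whisker_vertices whisker_edges" using bip by (rule bipartite_whisker)
    show "vertex_decomposable (Ind whisker_vertices whisker_edges)"
      unfolding Ind_whisker by (rule vd_wcomplex[OF admissible_whisker])
    show "strip_zeros (hvec (Ind whisker_vertices whisker_edges)) = map int (fvec (Ind V E))"
      using hvec_whisker_graph same_fvec by simp
  qed
qed

end
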